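(* Let $k\ge 3$, let $w\in\mathbb{C}^k$ with $w_i\neq 0$ for all $i\in\{1,\ldots,k\}$, and let $a=(a_{ij})\in M_k(\mathbb{C})$ be positive semidefinite with $a_{ij}=w_i\overline{w_j}$ for all $i,j$ with $|i-j|\le 1$. Then $a_{ij}=w_i\overline{w_j}$ for all $i,j\in\{1,\ldots,k\}$. *)

theory Defs
  imports "HOL-Analysis.Analysis"
begin

text \<open>A k x k complex matrix is represented by a function nat => nat => complex,
  with entries indexed by {1..k}.\<close>

definition psd_mat :: "nat \<Rightarrow> (nat \<Rightarrow> nat \<Rightarrow> complex) \<Rightarrow> bool" where
  "psd_mat k a \<longleftrightarrow>
     (\<forall>i\<in>{1..k}. \<forall>j\<in>{1..k}. a j i = cnj (a i j)) \<and>
     (\<forall>x :: nat \<Rightarrow> complex.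
        Im (\<Sum>i=1..k. \<Sum>j=1..k. cnj (x i) * a i j * x j) = 0 \<and>
        Re (\<Sum>i=1..k. \<Sum>j=1..k. cnj (x i) * a i j * x j) \<ge> 0)"

end

theory Submission
  imports Defs
begin

text \<open>For indices
  i < j with j \<ge> i + 2 the vector y = conj(w(i+1)) e_i - conj(w i) e_(i+1) satisfies
  y* a y = 0, since only the 2 x 2 band block on {i, i+1} enters. For a positive
  semidefinite matrix this forces a y = 0, and row j of a y = 0 reads
  a_(j,i) conj(w(i+1)) = a_(j,i+1) conj(w i). Induction on j - i then fills in the
  lower triangle, and the upper triangle follows by hermiticity.\<close>

definition sesq_form :: "nat \<Rightarrow> (nat \<Rightarrow> nat \<Rightarrow> complex) \<Rightarrow> (nat \<Rightarrow> complex) \<Rightarrow> (nat \<Rightarrow> complex) \<Rightarrow> complex"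
  where "sesq_form k a x y = (\<Sum>i=1..k. \<Sum>j=1..k. cnj (x i) * a i j * y j)"

lemma psd_mat_hermitian:
  assumes "psd_mat k a" "i \<in> {1..k}" "j \<in> {1..k}"
  shows "a j i = cnj (a i j)"
  using assms unfolding psd_mat_def by blast

lemma
  assumes "psd_mat k a"
  shows Im_sesq_form_self: "Im (sesq_form k a x x) = 0"
    and Re_sesq_form_self_nonneg: "Re (sesq_form k a x x) \<ge> 0"
  using assms unfolding psd_mat_def sesq_form_def by blast+

lemma sesq_form_swap:
  assumes "\<forall>i\<in>{1..k}. \<forall>j\<in>{1..k}. a j i = cnj (a i j)"
  shows "sesq_form k a x y = cnj (sesq_form k a y x)"
proof -
  have "sesq_form k a x y = (\<Sum>j=1..k. \<Sum>i=1..k. cnj (x i) * a i j * y j)"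
    unfolding sesq_form_def by (rule sum.swap)
  also have "\<dots> = (\<Sum>j=1..k. \<Sum>i=1..k. cnj (cnj (y j) * a j i * x i))"
  proof (intro sum.cong refl)
    fix i j assume "i \<in> {1..k}" "j \<in> {1..k}"
    then have "a i j = cnj (a j i)"
      using assms by blast
    then show "cnj (x i) * a i j * y j = cnj (cnj (y j) * a j i * x i)"
      by (simp add: mult.commute mult.left_commute)
  qed
  finally show ?thesis
    by (simp add: sesq_form_def cnj_sum)
qed

lemma sesq_form_add_scaled_self:
  "sesq_form k a (\<lambda>n. y n + c * z n) (\<lambda>n. y n + c * z n)
     = sesq_form k a y y + c * sesq_form k a y z + cnj c * sesq_form k a z y
       + cnj c * c * sesq_form k a z z"
  unfolding sesq_form_def
  by (simp add: algebra_simps sum.distrib sum_distrib_left)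

lemma psd_mat_sesq_form_null:
  assumes psd: "psd_mat k a" and null: "sesq_form k a y y = 0"
  shows "sesq_form k a z y = 0"
proof -
  define b where "b = sesq_form k a z y"
  define q where "q = Re (sesq_form k a z z)"
  define t :: real where "t = - 1 / (q + 1)"
  have "q \<ge> 0"
    unfolding q_def using Re_sesq_form_self_nonneg[OF psd] .
  then have "t < 0" "t * (q + 1) = - 1"
    unfolding t_def by (simp_all add: field_simps)
  then have "t * (2 + t * q) < 0"
    by (intro mult_neg_pos) (simp_all add: algebra_simps)
  then have "2 * t + t\<^sup>2 * q < 0"
    by (simp add: power2_eq_square algebra_simps)
  have zz: "sesq_form k a z z = of_real q"
    unfolding q_def using Im_sesq_form_self[OF psd] by (simp add: complex_eq_iff)
  have yz: "sesq_form k a y z = cnj b"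
    unfolding b_def using psd_mat_hermitian[OF psd] by (intro sesq_form_swap) blast
  \<comment> \<open>moving from y a small step against the direction of b z makes the form negative unless b = 0\<close>
  have "sesq_form k a (\<lambda>n. y n + of_real t * b * z n) (\<lambda>n. y n + of_real t * b * z n)
      = of_real (2 * t + t\<^sup>2 * q) * (b * cnj b)"
    unfolding sesq_form_add_scaled_self null yz zz b_def[symmetric]
    by (simp add: algebra_simps power2_eq_square)
  also have "\<dots> = of_real ((cmod b)\<^sup>2 * (2 * t + t\<^sup>2 * q))"
    by (simp add: complex_norm_square[symmetric] mult.commute)
  finally have "(cmod b)\<^sup>2 * (2 * t + t\<^sup>2 * q) \<ge> 0"
    using Re_sesq_form_self_nonneg[OF psd, of "\<lambda>n. y n + of_real t * b * z n"] by simp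
  with \<open>2 * t + t\<^sup>2 * q < 0\<close> have "(cmod b)\<^sup>2 \<le> 0"
    by (simp add: zero_le_mult_iff)
  then show ?thesis unfolding b_def by simp
qed

lemma sum_two_points:
  assumes "finite A" "p \<in> A" "q \<in> A" "p \<noteq> q" "\<forall>n\<in>A - {p, q}. f n = 0"
  shows "sum f A = f p + f q"
proof -
  have "sum f A = sum f {p, q}"
    using assms by (intro sum.mono_neutral_right) auto
  then show ?thesis using assms(4) by simp
qed

lemma psd_mat_rank_one_block_extend:
  assumes psd: "psd_mat k a" and "p \<in> {1..k}" "q \<in> {1..k}" "j \<in> {1..k}" "p \<noteq> q" "w q \<noteq> 0"
    and block: "\<forall>m\<in>{p, q}. \<forall>n\<in>{p, q}. a m n = w m * cnj (w n)"
    and "a j q = w j * cnj (w q)"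
  shows "a j p = w j * cnj (w p)"
proof -
  define y where "y = (\<lambda>n. if n = p then cnj (w q) else if n = q then - cnj (w p) else 0)"
  have y_p: "y p = cnj (w q)" and y_q: "y q = - cnj (w p)" and y_0: "\<forall>n\<in>{1..k} - {p, q}. y n = 0"
    using \<open>p \<noteq> q\<close> by (simp_all add: y_def)
  have sesq_y: "sesq_form k a x y = (\<Sum>m=1..k. cnj (x m) * (a m p * cnj (w q) - a m q * cnj (w p)))" for x
    unfolding sesq_form_def
  proof (rule sum.cong[OF refl])
    fix m
    show "(\<Sum>n=1..k. cnj (x m) * a m n * y n) = cnj (x m) * (a m p * cnj (w q) - a m q * cnj (w p))"
      using assms(2,3,5) y_0 by (subst sum_two_points[of _ p q]) (simp_all add: y_p y_q algebra_simps)
  qed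
  have "sesq_form k a y y
      = cnj (y p) * (a p p * cnj (w q) - a p q * cnj (w p)) + cnj (y q) * (a q p * cnj (w q) - a q q * cnj (w p))"
    unfolding sesq_y using assms(2,3,5) y_0 by (intro sum_two_points) auto
  also have "\<dots> = 0"
    using block by (simp add: y_p y_q algebra_simps)
  finally have "sesq_form k a y y = 0" .
  then have "sesq_form k a (\<lambda>n. if n = j then 1 else 0) y = 0"
    by (rule psd_mat_sesq_form_null[OF psd])
  then have "a j p * cnj (w q) = a j q * cnj (w p)"
    using assms(4) unfolding sesq_y
    by (simp add: if_distrib[of cnj] if_distrib[of "\<lambda>c. c * _"] cong: if_cong)
  also have "\<dots> = (w j * cnj (w p)) * cnj (w q)"
    using assms(8) by simp
  finally show ?thesis
    using \<open>w q \<noteq> 0\<close> by simp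
qed

lemma psd_mat_rank_one_band_below_diagonal:
  assumes psd: "psd_mat k a" and w: "\<forall>i\<in>{1..k}. w i \<noteq> 0"
    and band: "\<forall>i\<in>{1..k}. \<forall>j\<in>{1..k}. (i \<le> j + 1 \<and> j \<le> i + 1) \<longrightarrow> a i j = w i * cnj (w j)"
    and "1 \<le> i" "i + d \<le> k"
  shows "a (i + d) i = w (i + d) * cnj (w i)"
  using assms(4,5)
proof (induction d arbitrary: i)
  case 0
  then show ?case using band by auto
next
  case (Suc d)
  show ?case
  proof (cases "d = 0")
    case True
    then show ?thesis using band Suc.prems by auto
  next
    case False
    have far: "a (i + Suc d) (Suc i) = w (i + Suc d) * cnj (w (Suc i))"
      using Suc.IH[of "Suc i"] Suc.prems by simp
    have block: "\<forall>m\<in>{i, Suc i}. \<forall>n\<in>{i, Suc i}. a m n = w m * cnj (w n)"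
      using band Suc.prems by auto
    have "w (Suc i) \<noteq> 0"
      using w Suc.prems by simp
    then show ?thesis
      using psd_mat_rank_one_block_extend[OF psd _ _ _ _ _ block far] Suc.prems by simp
  qed
qed

theorem lemma4p12:
  fixes k :: nat and w :: "nat \<Rightarrow> complex" and a :: "nat \<Rightarrow> nat \<Rightarrow> complex"
  assumes "k \<ge> 3"
    and "\<forall>i\<in>{1..k}. w i \<noteq> 0"
    and "psd_mat k a"
    and "\<forall>i\<in>{1..k}. \<forall>j\<in>{1..k}. (i \<le> j + 1 \<and> j \<le> i + 1) \<longrightarrow> a i j = w i * cnj (w j)"
  shows "\<forall>i\<in>{1..k}. \<forall>j\<in>{1..k}. a i j = w i * cnj (w j)"
proof (intro ballI)
  note lower = psd_mat_rank_one_band_below_diagonal[OF assms(3,2,4)]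
  fix i j assume ij: "i \<in> {1..k}" "j \<in> {1..k}"
  show "a i j = w i * cnj (w j)"
  proof (cases "j \<le> i")
    case True
    then show ?thesis using lower[of j "i - j"] ij by simp
  next
    case False
    then have "a j i = w j * cnj (w i)" using lower[of i "j - i"] ij by simp
    then show ?thesis using psd_mat_hermitian[OF assms(3) ij(2) ij(1)] by simp
  qed
qed

end
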